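(* Let $S$ be a countable set with a distinguished site $0$, let $\mathcal A$ be the $Q$-matrix of an irreducible continuous-time Markov chain on $S$ with transition probabilities $p_t(x,y)$ and Green function $G_\infty(0,0)=\int_0^\infty p_t(0,0)\,dt$, and let $\beta=\frac{1}{G_\infty(0,0)}+1$ (with $1/\infty=0$). For $m>\beta$ let $r(m)$ be the unique solution $\lambda$ of $\int_0^\infty e^{-\lambda t}p_t(0,0)\,dt=\frac1{m-1}$, and for $1\le m\le\beta$ set $r(m)=0$. Then $m\mapsto r(m)$ is convex on $[1,\infty)$, and $$r(1)=0,\qquad r(m)\le m-1\ \text{ for all } m\ge 1,\qquad \lim_{m\to\infty}\frac{r(m)}{m-1}=1.$$
   Context: $r(m)$ is the exponential growth rate of the moments of the number of particles in a supercritical catalytic branching process with mean offspring number $m$ and motion $\mathcal A$, catalyst at $0$. *)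

theory Defs
  imports "HOL-Analysis.Analysis"
begin

definition q_matrix :: "('a::countable \<Rightarrow> 'a \<Rightarrow> real) \<Rightarrow> bool" where
  "q_matrix A \<longleftrightarrow> (\<forall>x y. x \<noteq> y \<longrightarrow> A x y \<ge> 0) \<and> (\<forall>x. ((\<lambda>y. A x y) has_sum 0) UNIV)"

definition irreducible_ctmc :: "('a::countable \<Rightarrow> 'a \<Rightarrow> real) \<Rightarrow> (real \<Rightarrow> 'a \<Rightarrow> 'a \<Rightarrow> real) \<Rightarrow> bool" where
  "irreducible_ctmc A p \<longleftrightarrow>
     q_matrix A \<and>
     (\<forall>t\<ge>0. \<forall>x y. p t x y \<ge> 0) \<and>
     (\<forall>t\<ge>0. \<forall>x. ((\<lambda>y. p t x y) has_sum 1) UNIV) \<and>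
     (\<forall>x y. p 0 x y = (if x = y then 1 else 0)) \<and>
     (\<forall>s\<ge>0. \<forall>t\<ge>0. \<forall>x z. ((\<lambda>y. p s x y * p t y z) has_sum p (s + t) x z) UNIV) \<and>
     (\<forall>x y. ((\<lambda>t. p t x y) has_real_derivative A x y) (at_right 0)) \<and>
     (\<forall>t>0. \<forall>x y. p t x y > 0)"

definition green :: "(real \<Rightarrow> 'a \<Rightarrow> 'a \<Rightarrow> real) \<Rightarrow> 'a \<Rightarrow> ennreal" where
  "green p x0 = (\<integral>\<^sup>+ t\<in>{0..}. ennreal (p t x0 x0) \<partial>lborel)"

definition laplace_ret :: "(real \<Rightarrow> 'a \<Rightarrow> 'a \<Rightarrow> real) \<Rightarrow> 'a \<Rightarrow> real \<Rightarrow> ennreal" where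
  "laplace_ret p x0 lam = (\<integral>\<^sup>+ t\<in>{0..}. ennreal (exp (- lam * t) * p t x0 x0) \<partial>lborel)"

definition beta_crit :: "(real \<Rightarrow> 'a \<Rightarrow> 'a \<Rightarrow> real) \<Rightarrow> 'a \<Rightarrow> real" where
  "beta_crit p x0 = (if green p x0 = \<infinity> then 1 else 1 / enn2real (green p x0) + 1)"

definition rate :: "(real \<Rightarrow> 'a \<Rightarrow> 'a \<Rightarrow> real) \<Rightarrow> 'a \<Rightarrow> real \<Rightarrow> real" where
  "rate p x0 m = (if m > beta_crit p x0
                 then (THE lam. laplace_ret p x0 lam = ennreal (1 / (m - 1)))
                 else 0)"

end

theory Submission
  imports Defs
begin

text \<open>The heart of the argument is that \<open>\<lambda> \<mapsto> 1 / L(\<lambda>)\<close>, where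
  \<open>L(\<lambda>) = \<integral>\<^sub>0\<^sup>\<infinity> e\<^sup>-\<^sup>\<lambda>\<^sup>t p\<^sub>t(x\<^sub>0, x\<^sub>0) dt\<close>, is concave on \<open>(0, \<infinity>)\<close>.
  For the skeleton chain observed at times \<open>nh\<close>, decomposing paths at their first return to \<open>x\<^sub>0\<close>
  gives the renewal equation, hence \<open>1 / (h \<Sum>\<^sub>n p\<^sub>n\<^sub>h(x\<^sub>0, x\<^sub>0) q\<^sup>n) = (1 - F(q)) / h\<close> with
  \<open>q = e\<^sup>-\<^sup>\<lambda>\<^sup>h\<close> and \<open>F\<close> the generating function of the first return time. As a function of \<open>\<lambda>\<close>,
  \<open>F(e\<^sup>-\<^sup>\<lambda>\<^sup>h)\<close> is a nonnegative combination of the convex functions \<open>e\<^sup>-\<^sup>\<lambda>\<^sup>h\<^sup>k\<close>, so \<open>(1 - F) / h\<close> is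
  concave; it converges to \<open>1 / L(\<lambda>)\<close> as \<open>h \<rightarrow> 0\<close> because \<open>|p\<^sub>s\<^sub>+\<^sub>t - p\<^sub>t| \<le> 1 - p\<^sub>s\<close> makes
  \<open>t \<mapsto> p\<^sub>t(x\<^sub>0, x\<^sub>0)\<close> uniformly continuous.

  Being concave with \<open>1 / L(\<lambda>) \<ge> \<lambda>\<close>, the map \<open>M(\<lambda>) = 1 / L(\<lambda>) + 1\<close> is continuous and strictly
  increasing, bounded below by \<open>\<beta>\<close>, and takes every value \<open>m > \<beta>\<close>; \<open>r\<close> is its inverse extended by \<open>0\<close>,
  and the inverse of an increasing concave function is convex. Finally \<open>r(m) / (m - 1) = r L(r)\<close> and
  \<open>\<lambda> L(\<lambda>) \<rightarrow> 1\<close> as \<open>\<lambda> \<rightarrow> \<infinity>\<close>.\<close>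

lemma has_sum_sum:
  fixes g :: "'k \<Rightarrow> 'b \<Rightarrow> real"
  assumes "finite K" "\<And>k. k \<in> K \<Longrightarrow> (g k has_sum s k) A"
  shows "((\<lambda>x. \<Sum>k\<in>K. g k x) has_sum (\<Sum>k\<in>K. s k)) A"
  using assms
proof (induction K rule: finite_induct)
  case (insert k K)
  have "((\<lambda>x. g k x + (\<Sum>k\<in>K. g k x)) has_sum (s k + (\<Sum>k\<in>K. s k))) A"
    by (rule has_sum_add) (use insert in auto)
  then show ?case using insert by simp
qed simp

lemma renewal_generating_function:
  fixes u f :: "nat \<Rightarrow> real"
  assumes u0: "u 0 = 1" and f0: "f 0 = 0"
    and renewal: "\<And>n. n \<ge> 1 \<Longrightarrow> u n = (\<Sum>k=1..n. f k * u (n - k))"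
    and su: "summable (\<lambda>n. norm (u n * s ^ n))" and sf: "summable (\<lambda>n. norm (f n * s ^ n))"
  shows "(\<Sum>n. u n * s ^ n) * (1 - (\<Sum>n. f n * s ^ n)) = 1"
proof -
  have convolution: "(\<Sum>i\<le>n. f i * s ^ i * (u (n - i) * s ^ (n - i)))
      = u n * s ^ n - (if n = 0 then 1 else 0)" for n
  proof -
    have "(\<Sum>i\<le>n. f i * s ^ i * (u (n - i) * s ^ (n - i))) = (\<Sum>i\<le>n. f i * u (n - i)) * s ^ n"
      unfolding sum_distrib_right
    proof (rule sum.cong)
      fix i assume "i \<in> {..n}"
      then have "s ^ i * s ^ (n - i) = s ^ n" by (simp flip: power_add)
      then show "f i * s ^ i * (u (n - i) * s ^ (n - i)) = f i * u (n - i) * s ^ n"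
        by (metis mult.assoc mult.left_commute)
    qed simp
    also have "(\<Sum>i\<le>n. f i * u (n - i)) = (\<Sum>i=1..n. f i * u (n - i))"
      by (simp add: atMost_atLeast0 sum.atLeast_Suc_atMost f0)
    finally show ?thesis
      by (cases "n = 0") (simp_all add: u0 renewal)
  qed
  have "(\<Sum>n. f n * s ^ n) * (\<Sum>n. u n * s ^ n)
      = (\<Sum>n. \<Sum>i\<le>n. f i * s ^ i * (u (n - i) * s ^ (n - i)))"
    by (rule Cauchy_product[OF sf su])
  also have "\<dots> = (\<Sum>n. u n * s ^ n - (if n = 0 then 1 else 0))"
    by (simp only: convolution)
  also have "\<dots> = (\<Sum>n. u n * s ^ n) - 1"
    using suminf_diff[OF summable_norm_cancel[OF su] sums_summable[OF sums_single[of 0 "\<lambda>_. 1::real"]]]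
      sums_unique[OF sums_single[of 0 "\<lambda>_. 1::real"]] by simp
  finally show ?thesis by (simp add: algebra_simps)
qed

lemma convex_on_suminf:
  fixes f :: "nat \<Rightarrow> 'a::real_vector \<Rightarrow> real"
  assumes "convex S" "\<And>k. convex_on S (f k)" "\<And>x. x \<in> S \<Longrightarrow> summable (\<lambda>k. f k x)"
  shows "convex_on S (\<lambda>x. \<Sum>k. f k x)"
proof (rule convex_onI[OF _ assms(1)])
  fix t :: real and x y assume t: "0 < t" "t < 1" and xy: "x \<in> S" "y \<in> S"
  have "(1 - t) *\<^sub>R x + t *\<^sub>R y \<in> S"
    using convexD[OF assms(1) xy, of "1 - t" t] t by simp
  then have "(\<Sum>k. f k ((1 - t) *\<^sub>R x + t *\<^sub>R y)) \<le> (\<Sum>k. (1 - t) * f k x + t * f k y)"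
    using t xy by (intro suminf_le convex_onD[OF assms(2)] summable_add summable_mult assms(3)) auto
  also have "\<dots> = (1 - t) * (\<Sum>k. f k x) + t * (\<Sum>k. f k y)"
    using xy assms(3) by (simp add: suminf_add[symmetric] summable_mult suminf_mult)
  finally show "(\<Sum>k. f k ((1 - t) *\<^sub>R x + t *\<^sub>R y)) \<le> (1 - t) * (\<Sum>k. f k x) + t * (\<Sum>k. f k y)" .
qed

lemma convex_on_exp_mult: "convex_on UNIV (\<lambda>x::real. exp (c * x))"
proof (rule convex_onI)
  fix t x y :: real assume "0 < t" "t < 1"
  then show "exp (c * ((1 - t) *\<^sub>R x + t *\<^sub>R y)) \<le> (1 - t) * exp (c * x) + t * exp (c * y)"
    using convex_onD[OF exp_convex, of t "c * x" "c * y"] by (simp add: algebra_simps)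
qed simp

lemma concave_on_tendsto:
  assumes "convex S" "F \<noteq> bot" "\<forall>\<^sub>F h in F. concave_on S (f h)"
    and "\<And>x. x \<in> S \<Longrightarrow> ((\<lambda>h. f h x) \<longlongrightarrow> g x) F"
  shows "concave_on S g"
  unfolding concave_on_iff
proof (intro conjI ballI allI impI)
  fix x y and u v :: real assume xy: "x \<in> S" "y \<in> S" and uv: "u \<ge> 0" "v \<ge> 0" "u + v = 1"
  have "u *\<^sub>R x + v *\<^sub>R y \<in> S" using convexD[OF assms(1) xy uv] .
  moreover have "\<forall>\<^sub>F h in F. u * f h x + v * f h y \<le> f h (u *\<^sub>R x + v *\<^sub>R y)"
    using assms(3) by eventually_elim (use xy uv in \<open>auto simp: concave_on_iff\<close>)
  ultimately show "u * g x + v * g y \<le> g (u *\<^sub>R x + v *\<^sub>R y)"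
    using xy by (intro tendsto_le[OF assms(2) assms(4) tendsto_add[OF tendsto_mult_left tendsto_mult_left]])
      (simp_all add: assms(4))
qed fact

lemma concave_on_strict_mono_on:
  fixes f :: "real \<Rightarrow> real"
  assumes concave: "concave_on {0<..} f" and ge: "\<And>x. 0 < x \<Longrightarrow> x \<le> f x"
  shows "strict_mono_on {0<..} f"
proof (rule strict_mono_onI, rule ccontr)
  \<comment> \<open>If \<open>f b \<le> f a\<close> with \<open>a < b\<close>, concavity keeps \<open>f\<close> below \<open>f b\<close> on \<open>[b, \<infinity>)\<close>,
    contradicting \<open>x \<le> f x\<close>.\<close>
  fix a b :: real assume a: "a \<in> {0<..}" and ab: "a < b" and "\<not> f a < f b"
  then have fba: "f b \<le> f a" by simp
  define c where "c = max (f b) b + 1"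
  define t where "t = (b - a) / (c - a)"
  have bc: "b < c" by (simp add: c_def)
  have t: "0 < t" "t \<le> 1" using a ab bc by (auto simp: t_def)
  have "t * (c - a) = b - a" using ab bc by (simp add: t_def)
  then have b_eq: "(1 - t) *\<^sub>R a + t *\<^sub>R c = b" by (simp add: algebra_simps)
  have "(1 - t) * f a + t * f c \<le> f b"
    using concave_onD[OF concave, of t a c] t a ab bc b_eq by simp
  also have "\<dots> = (1 - t) * f b + t * f b" by (simp add: algebra_simps)
  finally have "t * f c \<le> t * f b"
    using mult_left_mono[OF fba, of "1 - t"] t by linarith
  then have "f c \<le> f b" using t by simp
  moreover have "c \<le> f c" using ge[of c] a ab bc by simp
  ultimately show False by (simp add: c_def)
qed

lemma convex_on_inverse_of_concave:
  fixes M R :: "real \<Rightarrow> real"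
  assumes concave: "concave_on {0<..} M" and mono: "strict_mono_on {0<..} M"
    and M_ge: "\<And>l. 0 < l \<Longrightarrow> b \<le> M l"
    and R_below: "\<And>y. y \<le> b \<Longrightarrow> R y = 0"
    and R_above: "\<And>y. b < y \<Longrightarrow> 0 < R y \<and> M (R y) = y"
  shows "convex_on UNIV R"
proof (rule convex_on_linorderI)
  fix t x y :: real assume t: "0 < t" "t < 1" and "x < y"
  define w where "w = (1 - t) * x + t * y"
  have R_nonneg: "0 \<le> R z" for z
    using R_below[of z] R_above[of z] by (cases "z \<le> b") auto
  have "R w \<le> (1 - t) * R x + t * R y"
  proof (cases "w \<le> b")
    case True
    then show ?thesis using R_below R_nonneg t by simp
  next
    case False
    have "(1 - t) * x \<le> (1 - t) * y" using \<open>x < y\<close> t by (simp add: mult_left_mono)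
    then have "w \<le> y" by (simp add: w_def algebra_simps)
    then have y: "0 < R y" "M (R y) = y" using R_above False by auto
    have w: "0 < R w" "M (R w) = w" using R_above False by auto
    show ?thesis
    proof (rule ccontr)
      assume "\<not> ?thesis"
      then have less: "(1 - t) * R x + t * R y < R w" by simp
      \<comment> \<open>\<open>e\<close> stands in for \<open>R x\<close>, which lies outside the domain of \<open>M\<close> when \<open>x \<le> b\<close>.\<close>
      obtain e where e: "0 < e" "x \<le> M e" "(1 - t) * e + t * R y < R w"
      proof (cases "b < x")
        case True
        then show ?thesis using that[of "R x"] R_above[of x] less by auto
      next
        case False
        define e where "e = (R w - t * R y) / 2 / (1 - t)"
        have "R x = 0" using False by (simp add: R_below)
        then have gap: "t * R y < R w" using less by simp
        then have "0 < e" using t by (simp add: e_def)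
        moreover have "(1 - t) * e = (R w - t * R y) / 2" using t by (simp add: e_def field_simps)
        then have "(1 - t) * e + t * R y < R w" using gap by (simp add: field_simps)
        ultimately show ?thesis using that M_ge[of e] False by simp
      qed
      have "w \<le> (1 - t) * M e + t * M (R y)"
        using e(2) t y by (simp add: w_def mult_left_mono)
      also have "\<dots> \<le> M ((1 - t) * e + t * R y)"
        using concave_onD[OF concave, of t e "R y"] t e y by simp
      also have "\<dots> < M (R w)"
        using strict_mono_onD[OF mono _ _ e(3)] e t y w by (simp add: add_pos_pos)
      finally show False using w by simp
    qed
  qed
  then show "R ((1 - t) *\<^sub>R x + t *\<^sub>R y) \<le> (1 - t) * R x + t * R y" by (simp add: w_def)
qed simp

lemma nn_integral_nonneg_reals_split:
  fixes f :: "real \<Rightarrow> ennreal"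
  assumes h: "0 < h" and meas: "(\<lambda>t. f t * indicator {0..} t) \<in> borel_measurable lborel"
  shows "(\<integral>\<^sup>+ t\<in>{0..}. f t \<partial>lborel) = (\<Sum>n. \<integral>\<^sup>+ t\<in>{real n * h..<real (Suc n) * h}. f t \<partial>lborel)"
proof -
  have step_iff: "t \<in> {real n * h..<real (Suc n) * h} \<longleftrightarrow> n = nat \<lfloor>t / h\<rfloor>" if "0 \<le> t" for n t
  proof -
    have "t \<in> {real n * h..<real (Suc n) * h} \<longleftrightarrow> real n \<le> t / h \<and> t / h < real n + 1"
      using h by (auto simp: field_simps)
    also have "\<dots> \<longleftrightarrow> \<lfloor>t / h\<rfloor> = int n" by (simp add: floor_eq_iff)
    also have "\<dots> \<longleftrightarrow> n = nat \<lfloor>t / h\<rfloor>" using that h by auto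
    finally show ?thesis .
  qed
  have split: "f t * indicator {0..} t = (\<Sum>n. f t * indicator {real n * h..<real (Suc n) * h} t)" for t
  proof (cases "0 \<le> t")
    case True
    then have "(\<lambda>n. f t * indicator {real n * h..<real (Suc n) * h} t)
             = (\<lambda>n. if n = nat \<lfloor>t / h\<rfloor> then f t else 0)"
      using step_iff by (auto simp: indicator_def)
    then show ?thesis using True sums_unique[OF sums_single] by simp
  next
    case False
    then have "t \<notin> {real n * h..<real (Suc n) * h}" for n
      using h by (auto intro: order.trans[rotated])
    then show ?thesis using False by simp
  qed
  have "(\<lambda>t. f t * indicator {real n * h..<real (Suc n) * h} t) \<in> borel_measurable lborel" for n
  proof -
    have "{real n * h..<real (Suc n) * h} \<subseteq> {0..}"
      using h by (auto intro: order.trans[rotated])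
    then have "(\<lambda>t. f t * indicator {real n * h..<real (Suc n) * h} t)
             = (\<lambda>t. f t * indicator {0..} t * indicator {real n * h..<real (Suc n) * h} t)"
      by (auto simp: indicator_def fun_eq_iff)
    then show ?thesis using meas by simp
  qed
  then show ?thesis unfolding split by (rule nn_integral_suminf)
qed

lemma nn_integral_const_step:
  assumes "0 < h"
  shows "(\<integral>\<^sup>+ t\<in>{real n * h..<real (Suc n) * h}. ennreal c \<partial>lborel) = ennreal (c * h)"
proof -
  have "emeasure lborel {real n * h..<real (Suc n) * h} = ennreal h"
    using assms by (simp add: algebra_simps)
  then show ?thesis
    using assms by (subst nn_integral_cmult_indicator) (auto simp: ennreal_mult'')
qed

lemma geometric_step_sum_le:
  fixes h l :: real assumes "0 < h" "0 < l"
  shows "h / (1 - exp (- l * h)) \<le> 1 / l + h"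
proof -
  define q where "q = exp (- l * h)"
  have q: "0 < q" "q < 1" using assms by (auto simp: q_def)
  have "q * (1 + l * h) \<le> q * exp (l * h)"
    using q by (intro mult_left_mono exp_ge_add_one_self) auto
  also have "\<dots> = 1" by (simp add: q_def exp_minus_inverse mult.commute)
  finally have "h \<le> (1 / l + h) * (1 - q)" using assms q by (simp add: field_simps)
  then show ?thesis using q by (simp add: q_def divide_le_eq)
qed

locale ctmc =
  fixes A :: "'a::countable \<Rightarrow> 'a \<Rightarrow> real" and p :: "real \<Rightarrow> 'a \<Rightarrow> 'a \<Rightarrow> real" and x0 :: 'a
  assumes irreducible: "irreducible_ctmc A p"
begin

lemma p_nonneg: "0 \<le> t \<Longrightarrow> 0 \<le> p t x y"
  and p_row_has_sum: "0 \<le> t \<Longrightarrow> ((\<lambda>y. p t x y) has_sum 1) UNIV"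
  and p_zero: "p 0 x y = (if x = y then 1 else 0)"
  and chapman_kolmogorov: "0 \<le> s \<Longrightarrow> 0 \<le> t \<Longrightarrow> ((\<lambda>y. p s x y * p t y z) has_sum p (s + t) x z) UNIV"
  and p_has_right_derivative: "((\<lambda>t. p t x y) has_real_derivative A x y) (at_right 0)"
  using irreducible unfolding irreducible_ctmc_def by blast+

lemma p_le_one: assumes "0 \<le> t" shows "p t x y \<le> 1"
proof -
  have "((\<lambda>z. if z = y then p t x y else 0) has_sum p t x y) UNIV"
    by (rule has_sum_finite_neutralI[where B = "{y}"]) auto
  then show ?thesis
    by (rule has_sum_mono[OF _ p_row_has_sum[OF assms]]) (use p_nonneg[OF assms] in auto)
qed

lemma chapman_kolmogorov_ge: assumes "0 \<le> s" "0 \<le> t"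
  shows "p s x y * p t y z \<le> p (s + t) x z"
proof -
  have "((\<lambda>w. if w = y then p s x y * p t y z else 0) has_sum p s x y * p t y z) UNIV"
    by (rule has_sum_finite_neutralI[where B = "{y}"]) auto
  then show ?thesis
    by (rule has_sum_mono[OF _ chapman_kolmogorov[OF assms]]) (use p_nonneg assms in auto)
qed

text \<open>Chapman--Kolmogorov at time \<open>s\<close> splits \<open>p\<^sub>s\<^sub>+\<^sub>t(x\<^sub>0, x\<^sub>0)\<close> into \<open>p\<^sub>s(x\<^sub>0, x\<^sub>0) p\<^sub>t(x\<^sub>0, x\<^sub>0)\<close> and a
  remainder of mass at most \<open>1 - p\<^sub>s(x\<^sub>0, x\<^sub>0)\<close>.\<close>

lemma return_prob_lag_bound: assumes "0 \<le> s" "0 \<le> t"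
  shows "\<bar>p (s + t) x0 x0 - p t x0 x0\<bar> \<le> 1 - p s x0 x0"
proof -
  let ?a = "p s x0 x0" and ?b = "p t x0 x0"
  have bounds: "0 \<le> ?a" "?a \<le> 1" "0 \<le> ?b" "?b \<le> 1"
    using p_nonneg p_le_one assms by auto
  have "((\<lambda>y. p s x0 y + (if y = x0 then ?a * ?b - ?a else 0)) has_sum (1 + (?a * ?b - ?a))) UNIV"
    by (rule has_sum_add[OF p_row_has_sum[OF assms(1)]])
       (rule has_sum_finite_neutralI[where B = "{x0}"], auto)
  then have upper: "p (s + t) x0 x0 \<le> 1 + (?a * ?b - ?a)"
  proof (rule has_sum_mono[OF chapman_kolmogorov[OF assms]])
    fix y
    show "p s x0 y * p t y x0 \<le> p s x0 y + (if y = x0 then ?a * ?b - ?a else 0)"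
      using p_nonneg[OF assms(1), of x0 y] p_le_one[OF assms(2), of y x0]
      by (cases "y = x0") (auto simp: mult_left_le)
  qed
  have "(1 - ?a) * (1 - ?b) \<ge> 0" "?b * (1 - ?a) \<ge> 0" using bounds by simp_all
  then show ?thesis
    using chapman_kolmogorov_ge[OF assms, of x0 x0 x0] upper by (simp add: algebra_simps abs_le_iff)
qed

lemma return_prob_near_zero:
  assumes "0 < e" obtains d where "0 < d" "\<And>s. 0 \<le> s \<Longrightarrow> s \<le> d \<Longrightarrow> 1 - p s x0 x0 \<le> e"
proof -
  have "((\<lambda>t. p t x0 x0) \<longlongrightarrow> 1) (at_right 0)"
    using DERIV_continuous[OF p_has_right_derivative[of x0 x0]] by (simp add: continuous_within p_zero)
  then have "\<forall>\<^sub>F t in at_right 0. dist (p t x0 x0) 1 < e"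
    using assms by (rule tendstoD)
  then obtain d where d: "0 < d" "\<And>t. 0 < t \<Longrightarrow> t < d \<Longrightarrow> dist (p t x0 x0) 1 < e"
    unfolding eventually_at_right_field by auto
  show ?thesis
  proof (rule that[of "d / 2"])
    fix s assume "0 \<le> s" "s \<le> d / 2"
    then show "1 - p s x0 x0 \<le> e"
      using d(2)[of s] assms by (cases "s = 0") (auto simp: p_zero dist_real_def)
  qed (use d in simp)
qed

lemma continuous_on_return_prob: "continuous_on {0..} (\<lambda>t. p t x0 x0)"
proof (rule continuous_on_iff[THEN iffD2], intro ballI allI impI)
  fix t e :: real assume t: "t \<in> {0..}" and e: "0 < e"
  obtain d where d: "0 < d" "\<And>s. 0 \<le> s \<Longrightarrow> s \<le> d \<Longrightarrow> 1 - p s x0 x0 \<le> e / 2"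
    using return_prob_near_zero[of "e / 2"] e by auto
  have "\<bar>p t' x0 x0 - p t x0 x0\<bar> \<le> e / 2" if "t' \<in> {0..}" "dist t' t < d" for t'
  proof (cases "t \<le> t'")
    case True
    then show ?thesis
      using return_prob_lag_bound[of "t' - t" t] d(2)[of "t' - t"] t that by (auto simp: dist_real_def)
  next
    case False
    then show ?thesis
      using return_prob_lag_bound[of "t - t'" t'] d(2)[of "t - t'"] that by (auto simp: dist_real_def abs_minus_commute)
  qed
  then show "\<exists>d>0. \<forall>t'\<in>{0..}. dist t' t < d \<longrightarrow> dist (p t' x0 x0) (p t x0 x0) < e"
    using d(1) e by (force simp: dist_real_def)
qed

text \<open>The \<open>h\<close>-skeleton \<open>(X\<^sub>n\<^sub>h)\<^sub>n\<close> started at \<open>x\<^sub>0\<close>: \<open>taboo h n y\<close> is the probability of being at \<open>y\<close> at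
  step \<open>n\<close> without having returned to \<open>x\<^sub>0\<close> at steps \<open>1, \<dots>, n\<close>, and \<open>first_return h n\<close> that of
  the first return happening at step \<open>n\<close>.\<close>

fun taboo :: "real \<Rightarrow> nat \<Rightarrow> 'a \<Rightarrow> real" where
  "taboo h 0 y = (if y = x0 then 1 else 0)"
| "taboo h (Suc n) y = (if y = x0 then 0 else (\<Sum>\<^sub>\<infinity>z. taboo h n z * p h z y))"

fun first_return :: "real \<Rightarrow> nat \<Rightarrow> real" where
  "first_return h 0 = 0"
| "first_return h (Suc n) = (\<Sum>\<^sub>\<infinity>z. taboo h n z * p h z x0)"

definition skeleton_return :: "real \<Rightarrow> nat \<Rightarrow> real" where
  "skeleton_return h n = p (real n * h) x0 x0"

lemma taboo_nonneg: "0 \<le> h \<Longrightarrow> 0 \<le> taboo h n y"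
  by (induction n arbitrary: y) (auto intro!: infsum_nonneg mult_nonneg_nonneg p_nonneg)

lemma first_return_nonneg: "0 \<le> h \<Longrightarrow> 0 \<le> first_return h k"
  by (cases k) (auto intro!: infsum_nonneg mult_nonneg_nonneg p_nonneg taboo_nonneg)

lemma skeleton_step_has_sum:
  "0 \<le> h \<Longrightarrow> ((\<lambda>z. p (real m * h) x z * p h z y) has_sum p (real (Suc m) * h) x y) UNIV"
  using chapman_kolmogorov[of "real m * h" h x y] by (simp add: algebra_simps)

lemma skeleton_first_return_decomposition:
  assumes h: "0 \<le> h"
  shows "p (real n * h) x0 y = taboo h n y + (\<Sum>k=1..n. first_return h k * p (real (n - k) * h) x0 y)"
proof (induction n arbitrary: y)
  case 0
  then show ?case by (simp add: p_zero)
next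
  case (Suc n)
  define S where "S = (\<Sum>k=1..n. first_return h k * p (real (Suc (n - k)) * h) x0 y)"
  have split: "p (real n * h) x0 z * p h z y = taboo h n z * p h z y
      + (\<Sum>k=1..n. first_return h k * (p (real (n - k) * h) x0 z * p h z y))" for z
    by (subst Suc.IH) (simp add: distrib_right sum_distrib_right mult.assoc)
  have returned: "((\<lambda>z. \<Sum>k=1..n. first_return h k * (p (real (n - k) * h) x0 z * p h z y)) has_sum S) UNIV"
    unfolding S_def by (intro has_sum_sum has_sum_cmult_right skeleton_step_has_sum h) auto
  have "taboo h n z \<le> p (real n * h) x0 z" for z
  proof -
    have "0 \<le> (\<Sum>k=1..n. first_return h k * p (real (n - k) * h) x0 z)"
      using h by (intro sum_nonneg mult_nonneg_nonneg first_return_nonneg p_nonneg) auto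
    then show ?thesis using Suc.IH[of z] by linarith
  qed
  then have "(\<lambda>z. taboo h n z * p h z y) summable_on UNIV"
    by (intro summable_on_comparison_test[OF has_sum_imp_summable[OF skeleton_step_has_sum[OF h, of n x0 y]]])
       (use h taboo_nonneg p_nonneg in \<open>auto intro!: mult_right_mono mult_nonneg_nonneg\<close>)
  from has_sum_add[OF has_sum_infsum[OF this] returned]
  have "p (real (Suc n) * h) x0 y = (\<Sum>\<^sub>\<infinity>z. taboo h n z * p h z y) + S"
    using has_sum_unique skeleton_step_has_sum[OF h, of n x0 y] split by (metis (no_types, lifting) ext)
  moreover have "(\<Sum>k=1..n. first_return h k * p (real (Suc n - k) * h) x0 y) = S"
    unfolding S_def by (rule sum.cong) (auto simp: Suc_diff_le)
  then have "(\<Sum>k=1..Suc n. first_return h k * p (real (Suc n - k) * h) x0 y)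
      = S + first_return h (Suc n) * p 0 x0 y"
    by simp
  ultimately show ?case by (cases "y = x0") (simp_all add: p_zero)
qed

lemma skeleton_renewal: assumes "0 \<le> h" "1 \<le> n"
  shows "skeleton_return h n = (\<Sum>k=1..n. first_return h k * skeleton_return h (n - k))"
  using skeleton_first_return_decomposition[OF assms(1), of n x0] assms(2)
  by (cases n) (simp_all add: skeleton_return_def)

lemma skeleton_return_zero: "skeleton_return h 0 = 1"
  by (simp add: skeleton_return_def p_zero)

lemma skeleton_return_bounds: "0 \<le> h \<Longrightarrow> 0 \<le> skeleton_return h n \<and> skeleton_return h n \<le> 1"
  by (simp add: skeleton_return_def p_nonneg p_le_one)

lemma first_return_le: assumes "0 \<le> h" shows "first_return h k \<le> 1"
proof (cases "k = 0")
  case False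
  have "first_return h k = first_return h k * skeleton_return h (k - k)"
    by (simp add: skeleton_return_zero)
  also have "\<dots> \<le> (\<Sum>j=1..k. first_return h j * skeleton_return h (k - j))"
    by (rule member_le_sum[where f = "\<lambda>j. first_return h j * skeleton_return h (k - j)"])
       (use False assms skeleton_return_bounds in \<open>auto intro!: mult_nonneg_nonneg first_return_nonneg\<close>)
  also have "\<dots> \<le> 1"
    using skeleton_renewal[OF assms, of k] skeleton_return_bounds[OF assms, of k] False by simp
  finally show ?thesis .
qed simp

lemma summable_skeleton_series:
  fixes a :: "nat \<Rightarrow> real"
  assumes "0 \<le> s" "s < 1" and "\<And>n. 0 \<le> a n \<and> a n \<le> 1"
  shows "summable (\<lambda>n. norm (a n * s ^ n))"
  by (rule summable_comparison_test'[OF summable_geometric[of s]])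
     (use assms in \<open>auto simp: abs_mult intro!: mult_left_le_one_le\<close>)

definition skeleton_laplace :: "real \<Rightarrow> real \<Rightarrow> real" where
  "skeleton_laplace h l = h * (\<Sum>n. skeleton_return h n * exp (- l * h) ^ n)"

definition first_return_transform :: "real \<Rightarrow> real \<Rightarrow> real" where
  "first_return_transform h l = (\<Sum>k. first_return h k * exp (- l * h) ^ k)"

lemma skeleton_laplace_renewal: assumes "0 < h" "0 < l"
  shows "0 < skeleton_laplace h l"
    and "1 / skeleton_laplace h l = (1 - first_return_transform h l) / h"
proof -
  define s where "s = exp (- l * h)"
  have s: "0 \<le> s" "s < 1" using assms by (auto simp: s_def)
  have bounded: "0 \<le> skeleton_return h n \<and> skeleton_return h n \<le> 1"
    "0 \<le> first_return h n \<and> first_return h n \<le> 1" for n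
    using assms skeleton_return_bounds first_return_nonneg first_return_le by auto
  have su: "summable (\<lambda>n. norm (skeleton_return h n * s ^ n))"
    and sf: "summable (\<lambda>n. norm (first_return h n * s ^ n))"
    using s bounded by (blast intro: summable_skeleton_series)+
  define U where "U = (\<Sum>n. skeleton_return h n * s ^ n)"
  have renewal: "U * (1 - first_return_transform h l) = 1"
    unfolding U_def first_return_transform_def s_def[symmetric]
    by (rule renewal_generating_function[OF skeleton_return_zero _ _ su sf])
       (simp_all add: skeleton_renewal assms less_imp_le)
  have "0 \<le> U"
    unfolding U_def using bounded s by (intro suminf_nonneg summable_norm_cancel[OF su]) simp
  then have "0 < U" using renewal by (cases "U = 0") auto
  then show "0 < skeleton_laplace h l" "1 / skeleton_laplace h l = (1 - first_return_transform h l) / h"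
    using renewal assms unfolding skeleton_laplace_def U_def s_def by (simp_all add: field_simps)
qed

lemma convex_first_return_transform: assumes "0 < h"
  shows "convex_on {0<..} (first_return_transform h)"
proof -
  have "exp (- l * h) ^ k = exp ((- h * real k) * l)" for l k
    by (simp flip: exp_of_nat_mult add: algebra_simps)
  moreover have "convex_on {0<..} (\<lambda>l. first_return h k * exp ((- h * real k) * l))" for k
    using assms first_return_nonneg
    by (intro convex_on_cmul convex_on_subset[OF convex_on_exp_mult]) auto
  moreover have "summable (\<lambda>k. first_return h k * exp (- l * h) ^ k)" if "0 < l" for l
    using assms that first_return_nonneg first_return_le
    by (intro summable_norm_cancel[OF summable_skeleton_series]) auto
  ultimately show ?thesis
    unfolding first_return_transform_def by (intro convex_on_suminf) auto
qed

lemma concave_inverse_skeleton_laplace: assumes "0 < h"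
  shows "concave_on {0<..} (\<lambda>l. (1 - first_return_transform h l) / h)"
  unfolding concave_on_def
  using convex_on_cdiv[OF _ convex_on_add[OF convex_first_return_transform[OF assms] convex_on_const[THEN iffD2]], of h "-1"] assms
  by (simp add: diff_divide_distrib)

lemma borel_measurable_discounted_return:
  assumes "S \<in> sets borel" "S \<subseteq> {0..}"
  shows "(\<lambda>t. ennreal (exp (- l * t) * p t x0 x0) * indicator S t) \<in> borel_measurable lborel"
proof -
  have "continuous_on S (\<lambda>t. exp (- l * t) * p t x0 x0)"
    by (intro continuous_intros continuous_on_subset[OF continuous_on_return_prob assms(2)])
  then have "(\<lambda>t. indicator S t *\<^sub>R (exp (- l * t) * p t x0 x0)) \<in> borel_measurable borel"
    by (rule borel_measurable_continuous_on_indicator[OF assms(1)])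
  then have "(\<lambda>t. ennreal (indicator S t *\<^sub>R (exp (- l * t) * p t x0 x0))) \<in> borel_measurable borel"
    by measurable
  moreover have "(\<lambda>t. ennreal (indicator S t *\<^sub>R (exp (- l * t) * p t x0 x0)))
      = (\<lambda>t. ennreal (exp (- l * t) * p t x0 x0) * indicator S t)"
    by (simp add: fun_eq_iff indicator_mult_ennreal mult.commute)
  ultimately show ?thesis by simp
qed

lemma discounted_return_step_bounds:
  assumes h: "0 < h" and l: "0 \<le> l" and e: "\<And>s. 0 \<le> s \<Longrightarrow> s \<le> h \<Longrightarrow> 1 - p s x0 x0 \<le> e"
    and t: "t \<in> {real n * h..<real (Suc n) * h}"
  shows "exp (- l * t) * p t x0 x0 \<le> exp (- l * h) ^ n * (skeleton_return h n + e)"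
    and "exp (- l * h) ^ n * skeleton_return h n
           \<le> exp (l * h) * (exp (- l * t) * p t x0 x0) + exp (- l * h) ^ n * e"
proof -
  have t': "real n * h \<le> t" "t - real n * h \<le> h" using t by (auto simp: algebra_simps)
  have t0: "0 \<le> t" using t' h by (meson order.trans of_nat_0_le_iff zero_le_mult_iff less_imp_le)
  have "\<bar>p ((t - real n * h) + real n * h) x0 x0 - p (real n * h) x0 x0\<bar> \<le> 1 - p (t - real n * h) x0 x0"
    using t' h by (intro return_prob_lag_bound) auto
  also have "\<dots> \<le> e" using t' by (intro e) auto
  finally have close: "\<bar>p t x0 x0 - skeleton_return h n\<bar> \<le> e" by (simp add: skeleton_return_def)
  have q_pow: "exp (- l * h) ^ n = exp (- l * (real n * h))"
    by (simp flip: exp_of_nat_mult add: algebra_simps)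
  have "exp (- l * t) \<le> exp (- l * h) ^ n"
    unfolding q_pow using t' l by (simp add: mult_left_mono)
  then show "exp (- l * t) * p t x0 x0 \<le> exp (- l * h) ^ n * (skeleton_return h n + e)"
    using close p_nonneg[OF t0, of x0 x0] by (intro mult_mono) auto
  have "l * t \<le> l * (real n * h + h)" using t' l by (intro mult_left_mono) auto
  then have "exp (- l * h) ^ n \<le> exp (l * h) * exp (- l * t)"
    unfolding q_pow mult_exp_exp by (simp add: algebra_simps)
  from mult_right_mono[OF this p_nonneg[OF t0, of x0 x0]]
  have "exp (- l * h) ^ n * p t x0 x0 \<le> exp (l * h) * (exp (- l * t) * p t x0 x0)"
    by (simp add: mult.assoc)
  moreover have "exp (- l * h) ^ n * skeleton_return h n \<le> exp (- l * h) ^ n * (p t x0 x0 + e)"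
    using close by (intro mult_left_mono) auto
  ultimately show "exp (- l * h) ^ n * skeleton_return h n
           \<le> exp (l * h) * (exp (- l * t) * p t x0 x0) + exp (- l * h) ^ n * e"
    by (simp add: algebra_simps)
qed

lemma laplace_ret_split: assumes "0 < h"
  shows "laplace_ret p x0 l
    = (\<Sum>n. \<integral>\<^sup>+ t\<in>{real n * h..<real (Suc n) * h}. ennreal (exp (- l * t) * p t x0 x0) \<partial>lborel)"
  unfolding laplace_ret_def
  by (rule nn_integral_nonneg_reals_split[OF assms borel_measurable_discounted_return]) auto

lemma skeleton_laplace_sums: assumes "0 < h" "0 < l"
  shows "(\<lambda>n. exp (- l * h) ^ n * skeleton_return h n * h) sums skeleton_laplace h l"
proof -
  have "summable (\<lambda>n. skeleton_return h n * exp (- l * h) ^ n)"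
    using assms skeleton_return_bounds by (intro summable_norm_cancel[OF summable_skeleton_series]) auto
  from sums_mult[OF summable_sums[OF this], of h] show ?thesis
    by (simp add: skeleton_laplace_def algebra_simps)
qed

lemma geometric_step_sums:
  fixes h l :: real assumes "0 < h" "0 < l"
  shows "(\<lambda>n. exp (- l * h) ^ n * c * h) sums (c * (h / (1 - exp (- l * h))))"
  using sums_mult[OF geometric_sums[of "exp (- l * h)"], of "c * h"] assms
  by (simp add: algebra_simps)

lemma skeleton_laplace_le: assumes "0 < h" "0 < l"
  shows "skeleton_laplace h l \<le> h / (1 - exp (- l * h))"
  using sums_le[OF _ skeleton_laplace_sums[OF assms] geometric_step_sums[OF assms, of 1]]
    assms skeleton_return_bounds by (simp add: mult_left_le)

lemma laplace_ret_le_skeleton: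
  assumes h: "0 < h" and l: "0 < l" and e: "\<And>s. 0 \<le> s \<Longrightarrow> s \<le> h \<Longrightarrow> 1 - p s x0 x0 \<le> e"
  shows "laplace_ret p x0 l \<le> ennreal (skeleton_laplace h l + e * (h / (1 - exp (- l * h))))"
proof -
  let ?q = "exp (- l * h)"
  have e0: "0 \<le> e" using e[of 0] h by (simp add: p_zero)
  have "(\<integral>\<^sup>+ t\<in>{real n * h..<real (Suc n) * h}. ennreal (exp (- l * t) * p t x0 x0) \<partial>lborel)
      \<le> (\<integral>\<^sup>+ t\<in>{real n * h..<real (Suc n) * h}. ennreal (?q ^ n * (skeleton_return h n + e)) \<partial>lborel)" for n
    using discounted_return_step_bounds(1)[OF h less_imp_le[OF l] e]
    by (intro nn_integral_mono) (auto simp: indicator_def intro: ennreal_leI)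
  then have "laplace_ret p x0 l \<le> (\<Sum>n. ennreal (?q ^ n * skeleton_return h n * h + ?q ^ n * e * h))"
    unfolding laplace_ret_split[OF h] nn_integral_const_step[OF h]
    by (intro suminf_le) (simp_all add: algebra_simps)
  also have "\<dots> = ennreal (skeleton_laplace h l + e * (h / (1 - ?q)))"
    using h e0 skeleton_return_bounds
    by (intro suminf_ennreal_eq sums_add skeleton_laplace_sums geometric_step_sums h l) auto
  finally show ?thesis .
qed

lemma skeleton_step_le_integral:
  assumes h: "0 < h" and l: "0 < l" and e: "\<And>s. 0 \<le> s \<Longrightarrow> s \<le> h \<Longrightarrow> 1 - p s x0 x0 \<le> e"
  shows "ennreal (exp (- l * h) ^ n * skeleton_return h n * h)
    \<le> ennreal (exp (l * h)) * (\<integral>\<^sup>+ t\<in>{real n * h..<real (Suc n) * h}. ennreal (exp (- l * t) * p t x0 x0) \<partial>lborel)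
       + ennreal (exp (- l * h) ^ n * e * h)"
proof -
  let ?q = "exp (- l * h)" and ?I = "{real n * h..<real (Suc n) * h}"
  let ?g = "\<lambda>t. ennreal (exp (- l * t) * p t x0 x0)"
  have e0: "0 \<le> e" using e[of 0] h by (simp add: p_zero)
  have I_nonneg: "?I \<subseteq> {0..}" using h by (auto intro: order.trans[rotated])
  have pointwise: "ennreal (?q ^ n * skeleton_return h n) * indicator ?I t
      \<le> ennreal (exp (l * h)) * (?g t * indicator ?I t) + ennreal (?q ^ n * e) * indicator ?I t" for t
  proof (cases "t \<in> ?I")
    case True
    then have "0 \<le> t" using I_nonneg by blast
    then have "0 \<le> exp (- l * t) * p t x0 x0" by (simp add: p_nonneg)
    then have "ennreal (exp (l * h) * (exp (- l * t) * p t x0 x0) + ?q ^ n * e)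
        = ennreal (exp (l * h)) * ?g t + ennreal (?q ^ n * e)"
      using e0 by (simp add: ennreal_mult)
    then show ?thesis
      using True ennreal_leI[OF discounted_return_step_bounds(2)[OF h less_imp_le[OF l] e True]] by simp
  qed simp
  have "ennreal (?q ^ n * skeleton_return h n * h) = (\<integral>\<^sup>+ t\<in>?I. ennreal (?q ^ n * skeleton_return h n) \<partial>lborel)"
    by (rule nn_integral_const_step[OF h, symmetric])
  also have "\<dots> \<le> (\<integral>\<^sup>+ t. ennreal (exp (l * h)) * (?g t * indicator ?I t)
                     + ennreal (?q ^ n * e) * indicator ?I t \<partial>lborel)"
    by (rule nn_integral_mono) (rule pointwise)
  also have "\<dots> = ennreal (exp (l * h)) * (\<integral>\<^sup>+ t\<in>?I. ?g t \<partial>lborel)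
                     + (\<integral>\<^sup>+ t\<in>?I. ennreal (?q ^ n * e) \<partial>lborel)"
    using borel_measurable_discounted_return[OF _ I_nonneg]
    by (subst nn_integral_add) (simp_all add: nn_integral_cmult)
  also have "\<dots> = ennreal (exp (l * h)) * (\<integral>\<^sup>+ t\<in>?I. ?g t \<partial>lborel) + ennreal (?q ^ n * e * h)"
    by (simp only: nn_integral_const_step[OF h])
  finally show ?thesis .
qed

lemma skeleton_le_laplace_ret:
  assumes h: "0 < h" and l: "0 < l" and e: "\<And>s. 0 \<le> s \<Longrightarrow> s \<le> h \<Longrightarrow> 1 - p s x0 x0 \<le> e"
  shows "ennreal (skeleton_laplace h l)
    \<le> ennreal (exp (l * h)) * laplace_ret p x0 l + ennreal (e * (h / (1 - exp (- l * h))))"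
proof -
  let ?q = "exp (- l * h)"
  let ?J = "\<lambda>n. \<integral>\<^sup>+ t\<in>{real n * h..<real (Suc n) * h}. ennreal (exp (- l * t) * p t x0 x0) \<partial>lborel"
  have e0: "0 \<le> e" using e[of 0] h by (simp add: p_zero)
  have "ennreal (skeleton_laplace h l) \<le> (\<Sum>n. ennreal (exp (l * h)) * ?J n + ennreal (?q ^ n * e * h))"
    using h l skeleton_return_bounds skeleton_step_le_integral[OF h l e]
    by (subst suminf_ennreal_eq[OF _ skeleton_laplace_sums[OF h l], symmetric]) (auto intro: suminf_le)
  also have "(\<Sum>n. ennreal (?q ^ n * e * h)) = ennreal (e * (h / (1 - ?q)))"
    by (rule suminf_ennreal_eq[OF _ geometric_step_sums[OF h l]]) (use e0 h in auto)
  then have "(\<Sum>n. ennreal (exp (l * h)) * ?J n + ennreal (?q ^ n * e * h))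
      = ennreal (exp (l * h)) * laplace_ret p x0 l + ennreal (e * (h / (1 - ?q)))"
    by (simp add: suminf_add[symmetric] ennreal_suminf_cmult laplace_ret_split[OF h])
  finally show ?thesis .
qed

definition laplace_real :: "real \<Rightarrow> real" where
  "laplace_real l = enn2real (laplace_ret p x0 l)"

lemma laplace_ret_eq_laplace_real: assumes "0 < l" shows "laplace_ret p x0 l = ennreal (laplace_real l)"
proof -
  obtain d where "0 < d" "\<And>s. 0 \<le> s \<Longrightarrow> s \<le> d \<Longrightarrow> 1 - p s x0 x0 \<le> 1"
    using return_prob_near_zero[of 1] by auto
  from laplace_ret_le_skeleton[OF this(1) assms this(2)] have "laplace_ret p x0 l < top"
    using ennreal_less_top le_less_trans by blast
  then show ?thesis by (simp add: laplace_real_def)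
qed

lemma laplace_real_nonneg: "0 \<le> laplace_real l"
  by (simp add: laplace_real_def)

context
  fixes h l e :: real
  assumes h: "0 < h" and l: "0 < l" and e: "\<And>s. 0 \<le> s \<Longrightarrow> s \<le> h \<Longrightarrow> 1 - p s x0 x0 \<le> e"
begin

lemma skeleton_error_nonneg: "0 \<le> e * (h / (1 - exp (- l * h)))"
  using e[of 0] h l by (simp add: p_zero)

lemma laplace_real_le_skeleton_laplace: "laplace_real l \<le> skeleton_laplace h l + e * (h / (1 - exp (- l * h)))"
proof -
  have "ennreal (laplace_real l) \<le> ennreal (skeleton_laplace h l + e * (h / (1 - exp (- l * h))))"
    using laplace_ret_le_skeleton[OF h l e] by (simp only: laplace_ret_eq_laplace_real[OF l])
  then show ?thesis
    using skeleton_error_nonneg skeleton_laplace_renewal(1)[OF h l] by (subst (asm) ennreal_le_iff) auto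
qed

lemma skeleton_laplace_le_laplace_real:
  "skeleton_laplace h l \<le> exp (l * h) * laplace_real l + e * (h / (1 - exp (- l * h)))"
proof -
  have "ennreal (skeleton_laplace h l)
      \<le> ennreal (exp (l * h)) * ennreal (laplace_real l) + ennreal (e * (h / (1 - exp (- l * h))))"
    using skeleton_le_laplace_ret[OF h l e] by (simp only: laplace_ret_eq_laplace_real[OF l])
  also have "\<dots> = ennreal (exp (l * h) * laplace_real l + e * (h / (1 - exp (- l * h))))"
    using skeleton_error_nonneg laplace_real_nonneg by (simp add: ennreal_mult)
  finally show ?thesis
    using skeleton_error_nonneg laplace_real_nonneg by (subst (asm) ennreal_le_iff) auto
qed

end

lemma laplace_real_ge:
  assumes l: "0 < l" and d: "0 < d" and "e \<le> 1" and e: "\<And>s. 0 \<le> s \<Longrightarrow> s \<le> d \<Longrightarrow> 1 - p s x0 x0 \<le> e"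
  shows "(1 - e) * (1 - exp (- l * d)) / l \<le> laplace_real l"
proof -
  define F where "F t = - (1 - e) * exp (- l * t) / l" for t
  have "((\<lambda>t. (1 - e) * exp (- l * t)) has_integral (F d - F 0)) {0..d}"
  proof (rule fundamental_theorem_of_calculus)
    fix t assume "t \<in> {0..d}"
    have "(F has_real_derivative (1 - e) * exp (- l * t)) (at t within {0..d})"
      unfolding F_def using l by (auto intro!: derivative_eq_intros simp: field_simps)
    then show "(F has_vector_derivative (1 - e) * exp (- l * t)) (at t within {0..d})"
      by (simp add: has_real_derivative_iff_has_vector_derivative)
  qed (use d in auto)
  moreover have "F d - F 0 = (1 - e) * (1 - exp (- l * d)) / l"
    unfolding F_def using l by (simp add: field_simps)
  ultimately have integral: "((\<lambda>t. (1 - e) * exp (- l * t)) has_integral (1 - e) * (1 - exp (- l * d)) / l) {0..d}"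
    by simp
  have "ennreal ((1 - e) * (1 - exp (- l * d)) / l)
      = (\<integral>\<^sup>+ t. ennreal (indicator {0..d} t * ((1 - e) * exp (- l * t))) \<partial>lborel)"
    using nn_integral_has_integral_lebesgue[OF _ integral] \<open>e \<le> 1\<close> by simp
  also have "\<dots> \<le> laplace_ret p x0 l"
    unfolding laplace_ret_def
  proof (rule nn_integral_mono)
    fix t
    have "1 - e \<le> p t x0 x0" if "t \<in> {0..d}" using e[of t] that by auto
    then show "ennreal (indicator {0..d} t * ((1 - e) * exp (- l * t)))
        \<le> ennreal (exp (- l * t) * p t x0 x0) * indicator {0..} t"
      by (auto simp: indicator_def mult.commute intro!: ennreal_leI)
  qed
  finally show ?thesis
    by (simp add: laplace_ret_eq_laplace_real[OF l] ennreal_le_iff laplace_real_nonneg)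
qed

lemma laplace_real_pos: assumes "0 < l" shows "0 < laplace_real l"
proof -
  obtain d where "0 < d" "\<And>s. 0 \<le> s \<Longrightarrow> s \<le> d \<Longrightarrow> 1 - p s x0 x0 \<le> 1 / 2"
    using return_prob_near_zero[of "1 / 2"] by auto
  from laplace_real_ge[OF assms this(1) _ this(2)] have "(1 - 1 / 2) * (1 - exp (- l * d)) / l \<le> laplace_real l"
    by simp
  moreover have "0 < (1 - 1 / 2) * (1 - exp (- l * d)) / l" using assms \<open>0 < d\<close> by simp
  ultimately show ?thesis by linarith
qed

lemma laplace_real_le_inverse: assumes l: "0 < l" shows "laplace_real l \<le> 1 / l"
proof -
  have bound: "\<forall>\<^sub>F e in at_right 0. laplace_real l \<le> (1 + e) * (1 / l + e)"
    unfolding eventually_at_right_field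
  proof (intro exI[of _ 1] conjI allI impI)
    fix e :: real assume e: "0 < e" "e < 1"
    obtain d where d: "0 < d" "\<And>s. 0 \<le> s \<Longrightarrow> s \<le> d \<Longrightarrow> 1 - p s x0 x0 \<le> e"
      using return_prob_near_zero[OF e(1)] by auto
    define h where "h = min d e"
    have h: "0 < h" "h \<le> e" "\<And>s. 0 \<le> s \<Longrightarrow> s \<le> h \<Longrightarrow> 1 - p s x0 x0 \<le> e"
      using d e by (auto simp: h_def)
    define X where "X = h / (1 - exp (- l * h))"
    have "laplace_real l \<le> skeleton_laplace h l + e * X"
      unfolding X_def by (rule laplace_real_le_skeleton_laplace[OF h(1) l h(3)])
    also have "\<dots> \<le> (1 + e) * X"
      using skeleton_laplace_le[OF h(1) l, folded X_def] by (simp add: algebra_simps)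
    also have "\<dots> \<le> (1 + e) * (1 / l + e)"
      using geometric_step_sum_le[OF h(1) l] h e by (intro mult_left_mono) (auto simp: X_def)
    finally show "laplace_real l \<le> (1 + e) * (1 / l + e)" .
  qed simp
  have "((\<lambda>e. (1 + e) * (1 / l + e)) \<longlongrightarrow> (1 + 0) * (1 / l + 0)) (at_right 0)"
    by (intro tendsto_intros)
  from tendsto_le[OF _ this tendsto_const bound] show ?thesis by simp
qed

lemma skeleton_laplace_tendsto: assumes l: "0 < l"
  shows "((\<lambda>h. skeleton_laplace h l) \<longlongrightarrow> laplace_real l) (at_right 0)"
proof (rule tendstoI)
  fix \<epsilon> :: real assume \<epsilon>: "0 < \<epsilon>"
  define e where "e = \<epsilon> / (2 * (1 / l + 1))"
  have e_pos: "0 < e" unfolding e_def using \<epsilon> l by (intro divide_pos_pos mult_pos_pos add_pos_pos) auto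
  have "0 < 1 / l + 1" using l by (simp add: add_pos_pos)
  then have e_error: "e * (1 / l + 1) = \<epsilon> / 2"
    unfolding e_def by (simp add: field_simps del: one_add_one)
  obtain d where d: "0 < d" "\<And>s. 0 \<le> s \<Longrightarrow> s \<le> d \<Longrightarrow> 1 - p s x0 x0 \<le> e"
    using return_prob_near_zero[OF e_pos] by auto
  have "((\<lambda>h. (exp (l * h) - 1) * laplace_real l) \<longlongrightarrow> (exp (l * 0) - 1) * laplace_real l) (at_right 0)"
    by (intro tendsto_intros)
  then have "\<forall>\<^sub>F h in at_right 0. (exp (l * h) - 1) * laplace_real l < \<epsilon> / 2"
    using \<epsilon> by (auto dest: order_tendstoD(2)[where a = "\<epsilon> / 2"])
  moreover have "\<forall>\<^sub>F h in at_right (0::real). 0 < h \<and> h < min d 1"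
    unfolding eventually_at_right_field by (rule exI[of _ "min d 1"]) (use d(1) in auto)
  ultimately show "\<forall>\<^sub>F h in at_right 0. dist (skeleton_laplace h l) (laplace_real l) < \<epsilon>"
  proof eventually_elim
    case (elim h)
    then have h: "0 < h" "\<And>s. 0 \<le> s \<Longrightarrow> s \<le> h \<Longrightarrow> 1 - p s x0 x0 \<le> e"
      using d(2) by auto
    define X where "X = h / (1 - exp (- l * h))"
    have "e * X \<le> e * (1 / l + 1)"
      using geometric_step_sum_le[OF h(1) l] elim e_pos by (intro mult_left_mono) (auto simp: X_def)
    then have "e * X \<le> \<epsilon> / 2" using e_error by simp
    moreover have "exp (l * h) * laplace_real l - laplace_real l < \<epsilon> / 2" using elim by (simp add: algebra_simps)
    moreover have "laplace_real l \<le> exp (l * h) * laplace_real l"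
      using h l laplace_real_nonneg[of l] by (intro mult_le_cancel_right1[THEN iffD2]) auto
    ultimately show ?case
      using laplace_real_le_skeleton_laplace[OF h(1) l h(2), folded X_def]
        skeleton_laplace_le_laplace_real[OF h(1) l h(2), folded X_def]
      by (simp add: dist_real_def abs_less_iff)
  qed
qed

lemma concave_inverse_laplace_real: "concave_on {0<..} (\<lambda>l. 1 / laplace_real l)"
proof (rule concave_on_tendsto[of _ "at_right 0" "\<lambda>h l. (1 - first_return_transform h l) / h"])
  show "\<forall>\<^sub>F h in at_right 0. concave_on {0<..} (\<lambda>l. (1 - first_return_transform h l) / h)"
    using concave_inverse_skeleton_laplace by (auto simp: eventually_at_right_field intro: exI[of _ 1])
  fix l :: real assume "l \<in> {0<..}"
  then have l: "0 < l" by simp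
  have "((\<lambda>h. 1 / skeleton_laplace h l) \<longlongrightarrow> 1 / laplace_real l) (at_right 0)"
    using laplace_real_pos[OF l] by (intro tendsto_divide tendsto_const skeleton_laplace_tendsto l) simp
  moreover have "\<forall>\<^sub>F h in at_right 0. 1 / skeleton_laplace h l = (1 - first_return_transform h l) / h"
    using skeleton_laplace_renewal(2) l by (auto simp: eventually_at_right_field intro: exI[of _ 1])
  ultimately show "((\<lambda>h. (1 - first_return_transform h l) / h) \<longlongrightarrow> 1 / laplace_real l) (at_right 0)"
    using tendsto_cong by fastforce
qed simp_all

text \<open>The mean offspring number whose growth rate is \<open>l\<close>: \<open>r(m) = l\<close> means \<open>laplace_real l = 1 / (m - 1)\<close>.\<close>

definition mean_of_rate :: "real \<Rightarrow> real" where
  "mean_of_rate l = 1 / laplace_real l + 1"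

lemma concave_mean_of_rate: "concave_on {0<..} mean_of_rate"
  unfolding mean_of_rate_def
  by (intro concave_on_add concave_inverse_laplace_real) (simp add: concave_on_def convex_on_const)

lemma mean_of_rate_ge: assumes "0 < l" shows "l + 1 \<le> mean_of_rate l"
proof -
  have "l \<le> 1 / laplace_real l"
    using laplace_real_le_inverse[OF assms] laplace_real_pos[OF assms] assms by (simp add: field_simps)
  then show ?thesis by (simp add: mean_of_rate_def)
qed

lemma strict_mono_mean_of_rate: "strict_mono_on {0<..} mean_of_rate"
  using concave_mean_of_rate by (rule concave_on_strict_mono_on) (use mean_of_rate_ge in force)

lemma continuous_on_mean_of_rate: "continuous_on {0<..} mean_of_rate"
proof -
  have "continuous_on {0<..} (\<lambda>l. - mean_of_rate l)"
    using concave_mean_of_rate unfolding concave_on_def by (intro convex_on_continuous) auto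
  then show ?thesis
    using continuous_on_minus by fastforce
qed

lemma laplace_ret_le_green: "0 \<le> l \<Longrightarrow> laplace_ret p x0 l \<le> green p x0"
  unfolding green_def laplace_ret_def
  by (intro nn_integral_mono)
     (auto simp: indicator_def mult_left_le_one_le p_nonneg intro!: ennreal_leI)

lemma green_le_laplace_ret: assumes "l \<le> 0" shows "green p x0 \<le> laplace_ret p x0 l"
  unfolding green_def laplace_ret_def
proof (intro nn_integral_mono)
  fix t
  have "p t x0 x0 \<le> exp (- l * t) * p t x0 x0" if "0 \<le> t"
    using mult_right_mono[OF _ p_nonneg[OF that], of 1 "exp (- l * t)"] assms that
    by (simp add: mult_nonpos_nonneg)
  then show "ennreal (p t x0 x0) * indicator {0..} t \<le> ennreal (exp (- l * t) * p t x0 x0) * indicator {0..} t"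
    by (auto simp: indicator_def intro: ennreal_leI)
qed

lemma green_pos: "0 < green p x0"
proof -
  have "0 < ennreal (laplace_real 1)" using laplace_real_pos[of 1] by simp
  also have "\<dots> \<le> green p x0" using laplace_ret_le_green[of 1] laplace_ret_eq_laplace_real[of 1] by simp
  finally show ?thesis .
qed

lemma less_green_imp_less_laplace_ret:
  assumes "c < green p x0" shows "\<exists>l>0. c < laplace_ret p x0 l"
proof -
  let ?f = "\<lambda>n t. ennreal (exp (- (1 / real (Suc n)) * t) * p t x0 x0) * indicator {0..} t"
  have "incseq ?f"
  proof (intro incseq_SucI le_funI)
    fix n t
    have "- (1 / real (Suc n)) * t \<le> - (1 / real (Suc (Suc n))) * t" if "0 \<le> t"
      using that by (intro mult_right_mono) (auto simp: frac_le)
    then show "?f n t \<le> ?f (Suc n) t"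
      by (auto simp: indicator_def p_nonneg intro!: ennreal_leI mult_right_mono)
  qed
  moreover have "(SUP n. ?f n t) = ennreal (p t x0 x0) * indicator {0..} t" for t
  proof (cases "0 \<le> t")
    case True
    have "(\<lambda>n. exp (- (1 / real (Suc n)) * t) * p t x0 x0) \<longlonglongrightarrow> exp (- 0 * t) * p t x0 x0"
      by (intro tendsto_intros LIMSEQ_inverse_real_of_nat[unfolded inverse_eq_divide])
    then have "(\<lambda>n. ?f n t) \<longlonglongrightarrow> ennreal (p t x0 x0) * indicator {0..} t"
      using True by (simp add: tendsto_ennrealI)
    moreover have "(\<lambda>n. ?f n t) \<longlonglongrightarrow> (SUP n. ?f n t)"
      by (rule LIMSEQ_SUP) (use \<open>incseq ?f\<close> in \<open>auto simp: incseq_def le_fun_def\<close>)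
    ultimately show ?thesis using LIMSEQ_unique by blast
  qed simp
  moreover have "?f n \<in> borel_measurable lborel" for n
    by (rule borel_measurable_discounted_return) auto
  ultimately have "green p x0 = (SUP n. laplace_ret p x0 (1 / real (Suc n)))"
    unfolding green_def laplace_ret_def by (simp add: nn_integral_monotone_convergence_SUP[symmetric])
  then obtain n where "c < laplace_ret p x0 (1 / real (Suc n))"
    using assms by (auto simp: less_SUP_iff)
  then show ?thesis by (intro exI[of _ "1 / real (Suc n)"]) auto
qed

lemma one_le_beta_crit: "1 \<le> beta_crit p x0"
  by (simp add: beta_crit_def)

lemma beta_crit_le_mean_of_rate: assumes l: "0 < l" shows "beta_crit p x0 \<le> mean_of_rate l"
proof (cases "green p x0 = \<infinity>")
  case False
  then obtain G where G: "green p x0 = ennreal G" "0 \<le> G" by (cases "green p x0") auto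
  have "laplace_real l \<le> G"
    using laplace_ret_le_green[of l] laplace_ret_eq_laplace_real[OF l] l G by simp
  then show ?thesis
    using laplace_real_pos[OF l] G False by (simp add: beta_crit_def mean_of_rate_def divide_left_mono)
qed (use laplace_real_pos[OF l] in \<open>simp add: beta_crit_def mean_of_rate_def\<close>)

lemma inverse_less_green: assumes "beta_crit p x0 < m" shows "ennreal (1 / (m - 1)) < green p x0"
proof (cases "green p x0 = \<infinity>")
  case False
  then obtain G where G: "green p x0 = ennreal G" "0 \<le> G" by (cases "green p x0") auto
  have "0 < G" using green_pos G by simp
  moreover have "1 / G < m - 1" using assms False G by (simp add: beta_crit_def)
  moreover have "1 < m" using assms one_le_beta_crit by linarith
  ultimately have "1 / (m - 1) < G"
    by (simp add: divide_less_eq mult.commute)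
  then show ?thesis using G \<open>0 < G\<close> by (simp add: ennreal_lessI)
qed simp

lemma mean_of_rate_surj: assumes m: "beta_crit p x0 < m" obtains l where "0 < l" "mean_of_rate l = m"
proof -
  have m1: "1 < m" using m one_le_beta_crit by linarith
  obtain l1 where l1: "0 < l1" "ennreal (1 / (m - 1)) < laplace_ret p x0 l1"
    using less_green_imp_less_laplace_ret[OF inverse_less_green[OF m]] by auto
  then have "1 / (m - 1) < laplace_real l1"
    using laplace_ret_eq_laplace_real[OF l1(1)] m1 ennreal_less_iff by simp
  then have "mean_of_rate l1 < m"
    using m1 laplace_real_pos[OF l1(1)] by (simp add: mean_of_rate_def field_simps)
  moreover have "m \<le> mean_of_rate m" using mean_of_rate_ge[of m] m1 by simp
  moreover have "l1 \<le> m"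
  proof (rule ccontr)
    assume "\<not> l1 \<le> m"
    then have "mean_of_rate m < mean_of_rate l1"
      using strict_mono_onD[OF strict_mono_mean_of_rate, of m l1] m1 by simp
    then show False using calculation by simp
  qed
  moreover have "continuous_on {l1..m} mean_of_rate"
    by (rule continuous_on_subset[OF continuous_on_mean_of_rate]) (use l1 in auto)
  ultimately obtain l where l: "l1 \<le> l" "mean_of_rate l = m"
    using IVT'[of mean_of_rate l1 m m] by auto
  show ?thesis using l l1 by (intro that[of l]) auto
qed

lemma laplace_ret_eq_inverse_iff:
  assumes m: "beta_crit p x0 < m" and l: "0 < l" "mean_of_rate l = m"
  shows "laplace_ret p x0 l' = ennreal (1 / (m - 1)) \<longleftrightarrow> l' = l"
proof (cases "0 < l'")
  case True
  have m1: "1 < m" using m one_le_beta_crit by linarith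
  have "laplace_ret p x0 l' = ennreal (1 / (m - 1)) \<longleftrightarrow> laplace_real l' = 1 / (m - 1)"
    using m1 laplace_real_nonneg[of l'] by (simp add: laplace_ret_eq_laplace_real[OF True])
  also have "\<dots> \<longleftrightarrow> mean_of_rate l' = m"
    using m1 laplace_real_pos[OF True] by (auto simp: mean_of_rate_def field_simps)
  also have "\<dots> \<longleftrightarrow> l' = l"
    using strict_mono_on_eqD[OF strict_mono_mean_of_rate] True l by auto
  finally show ?thesis .
next
  case False
  then show ?thesis
    using green_le_laplace_ret[of l'] inverse_less_green[OF m] l by auto
qed

lemma rate_above_beta_crit: assumes m: "beta_crit p x0 < m"
  shows "0 < rate p x0 m" "mean_of_rate (rate p x0 m) = m"
proof -
  obtain l where l: "0 < l" "mean_of_rate l = m" using mean_of_rate_surj[OF m] .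
  then have "rate p x0 m = l"
    using m by (simp add: rate_def laplace_ret_eq_inverse_iff[OF m l])
  then show "0 < rate p x0 m" "mean_of_rate (rate p x0 m) = m" using l by auto
qed

lemma rate_convex: "convex_on UNIV (rate p x0)"
  by (rule convex_on_inverse_of_concave[OF concave_mean_of_rate strict_mono_mean_of_rate
        beta_crit_le_mean_of_rate _ conjI[OF rate_above_beta_crit]])
     (simp_all add: rate_def)

lemma rate_le: assumes "1 \<le> m" shows "rate p x0 m \<le> m - 1"
proof (cases "beta_crit p x0 < m")
  case True
  from mean_of_rate_ge[OF rate_above_beta_crit(1)[OF True]] show ?thesis
    by (simp add: rate_above_beta_crit(2)[OF True])
qed (simp add: rate_def assms)

lemma rate_tendsto_at_top: "filterlim (rate p x0) at_top at_top"
proof (subst filterlim_at_top_gt[where c = 0], intro allI impI)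
  fix K :: real assume "0 < K"
  have bound: "K \<le> rate p x0 m" if m: "max (beta_crit p x0) (mean_of_rate K) < m" for m
  proof (rule ccontr)
    assume "\<not> K \<le> rate p x0 m"
    then have "mean_of_rate (rate p x0 m) \<le> mean_of_rate K"
      using strict_mono_on_leD[OF strict_mono_mean_of_rate] rate_above_beta_crit(1) m \<open>0 < K\<close> by simp
    then show False using rate_above_beta_crit(2) m by simp
  qed
  show "\<forall>\<^sub>F m in at_top. K \<le> rate p x0 m"
    by (rule eventually_mono[OF eventually_gt_at_top bound])
qed

lemma laplace_real_asymptotic: "((\<lambda>l. l * laplace_real l) \<longlongrightarrow> 1) at_top"
proof (rule tendstoI)
  fix \<epsilon> :: real assume \<epsilon>: "0 < \<epsilon>"
  define e where "e = min (1 / 2) (\<epsilon> / 2)"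
  have e: "0 < e" "e \<le> 1" using \<epsilon> by (auto simp: e_def)
  obtain d where d: "0 < d" "\<And>s. 0 \<le> s \<Longrightarrow> s \<le> d \<Longrightarrow> 1 - p s x0 x0 \<le> e"
    using return_prob_near_zero[OF e(1)] by auto
  have "((\<lambda>l. exp (- l * d)) \<longlongrightarrow> 0) at_top"
    using d(1) by real_asymp
  from order_tendstoD(2)[OF this, of "\<epsilon> / 2"] \<epsilon>
  have "\<forall>\<^sub>F l in at_top. exp (- l * d) < \<epsilon> / 2" by simp
  then show "\<forall>\<^sub>F l in at_top. dist (l * laplace_real l) 1 < \<epsilon>"
    using eventually_gt_at_top[of 0]
  proof eventually_elim
    case (elim l)
    have "l * laplace_real l \<le> 1" using laplace_real_le_inverse[OF elim(2)] elim(2) by (simp add: field_simps)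
    moreover have "(1 - e) * (1 - exp (- l * d)) \<le> l * laplace_real l"
      using laplace_real_ge[OF elim(2) d(1) e(2) d(2)] elim(2) by (simp add: field_simps)
    moreover have "1 - \<epsilon> < (1 - e) * (1 - exp (- l * d))"
    proof -
      have "0 \<le> e * exp (- l * d)" using e by simp
      moreover have "e \<le> \<epsilon> / 2" by (simp add: e_def)
      ultimately show ?thesis using elim(1) by (simp add: algebra_simps)
    qed
    ultimately show ?case by (simp add: dist_real_def abs_less_iff)
  qed
qed

lemma rate_ratio_tendsto: "((\<lambda>m. rate p x0 m / (m - 1)) \<longlongrightarrow> 1) at_top"
proof -
  have eq: "\<forall>\<^sub>F m in at_top. rate p x0 m * laplace_real (rate p x0 m) = rate p x0 m / (m - 1)"
    using eventually_gt_at_top[of "beta_crit p x0"]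
  proof eventually_elim
    case (elim m)
    then have "m - 1 = 1 / laplace_real (rate p x0 m)"
      using rate_above_beta_crit(2)[OF elim] by (simp add: mean_of_rate_def)
    then show ?case by simp
  qed
  from filterlim_compose[OF laplace_real_asymptotic rate_tendsto_at_top] show ?thesis
    by (rule tendsto_cong[OF eq, THEN iffD1])
qed

end

theorem corollary1:
  fixes A :: "'a::countable \<Rightarrow> 'a \<Rightarrow> real"
    and p :: "real \<Rightarrow> 'a \<Rightarrow> 'a \<Rightarrow> real"
    and x0 :: 'a
  assumes "irreducible_ctmc A p"
  shows "convex_on {1..} (rate p x0) \<and>
         rate p x0 1 = 0 \<and>
         (\<forall>m\<ge>1. rate p x0 m \<le> m - 1) \<and>
         ((\<lambda>m. rate p x0 m / (m - 1)) \<longlongrightarrow> 1) at_top"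
proof -
  interpret ctmc A p x0 by (rule ctmc.intro) (rule assms)
  have "convex_on {1..} (rate p x0)"
    by (rule convex_on_subset[OF rate_convex]) auto
  moreover have "rate p x0 1 = 0"
    using one_le_beta_crit by (simp add: rate_def)
  ultimately show ?thesis
    using rate_le rate_ratio_tendsto by simp
qed

end
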